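(* Let $G=(V,E)$ be a finite, simple, connected graph with $|V|\geq 3$, let $\mathcal{T}\subset V$ be a twin class of $G$ (of any size), and let $d\in\mathrm{Der}(\mathcal{A}(G))$ with $d(e_i)=\sum_{k\in V}d_{ik}e_k$. Then: (i) $d_{ik}=d_{ki}=0$ for all $i\in\mathcal{T}$ and $k\in V\setminus\mathcal{T}$; (ii) $d_{ii}=0$ for all $i\in\mathcal{T}$; (iii) $d_{\ell\ell}=0$ for all $\ell\in\mathcal{N}(\mathcal{T})$; (iv) $d_{ij}=-d_{ji}$ for all $i,j\in\mathcal{T}$ with $i\neq j$.
   Context: Throughout, $\mathbb{K}$ is a field of characteristic $0$. A graph $G=(V,E)$ has vertex set $V=\{1,\dots,n\}$ and is assumed finite, simple (no loops, no multiple edges) and connected. $\mathcal{N}(i)$ denotes the set of neighbors of vertex $i$, and for $U\subset V$, $\mathcal{N}(U)=\{j\in V: j\in\mathcal{N}(i)\text{ for some } i\in U\}$. $(a_{ij})$ is the adjacency matrix ($a_{ij}=1$ if $i,j$ are adjacent, $0$ otherwise). The evolution algebra $\mathcal{A}(G)$ is the $\mathbb{K}$-algebra with basis $\{e_i: i\in V\}$ and product $e_i\cdot e_i=\sum_{k\in V}a_{ik}e_k=\sum_{k\in\mathcal{N}(i)}e_k$ and $e_i\cdot e_j=0$ for $i\neq j$. A derivation of $\mathcal{A}(G)$ is a linear map $d:\mathcal{A}(G)\to\mathcal{A}(G)$ with $d(u\cdot v)=d(u)\cdot v+u\cdot d(v)$ for all $u,v$; $\mathrm{Der}(\mathcal{A}(G))$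 is the space of derivations, and for $d$ in it we write $d(e_i)=\sum_{k\in V}d_{ik}e_k$. Two vertices $i,j$ are twins if $\mathcal{N}(i)=\mathcal{N}(j)$; this is an equivalence relation whose classes are called twin classes. *)

theory Defs
  imports Main
begin

definition simple_graph :: "'v set \<Rightarrow> ('v \<Rightarrow> 'v \<Rightarrow> bool) \<Rightarrow> bool" where
  "simple_graph V E \<longleftrightarrow> finite V \<and> (\<forall>i j. E i j \<longrightarrow> i \<in> V \<and> j \<in> V)
     \<and> (\<forall>i j. E i j \<longrightarrow> E j i) \<and> (\<forall>i. \<not> E i i)"

definition connected_graph :: "'v set \<Rightarrow> ('v \<Rightarrow> 'v \<Rightarrow> bool) \<Rightarrow> bool" where
  "connected_graph V E \<longleftrightarrow> (\<forall>i\<in>V. \<forall>j\<in>V. E\<^sup>*\<^sup>* i j)"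

definition nbhd :: "('v \<Rightarrow> 'v \<Rightarrow> bool) \<Rightarrow> 'v \<Rightarrow> 'v set" where
  "nbhd E i = {j. E i j}"

definition nbhd_set :: "('v \<Rightarrow> 'v \<Rightarrow> bool) \<Rightarrow> 'v set \<Rightarrow> 'v set" where
  "nbhd_set E U = {j. \<exists>i\<in>U. j \<in> nbhd E i}"

definition twin_class :: "'v set \<Rightarrow> ('v \<Rightarrow> 'v \<Rightarrow> bool) \<Rightarrow> 'v set \<Rightarrow> bool" where
  "twin_class V E T \<longleftrightarrow> (\<exists>i\<in>V. T = {j\<in>V. nbhd E j = nbhd E i})"

text \<open>The evolution algebra A(G): elements are coordinate vectors u : V \<rightarrow> K
  (functions vanishing outside V); basis vectors e_i.\<close>
definition evo_space :: "'v set \<Rightarrow> ('v \<Rightarrow> 'k::field_char_0) set" where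
  "evo_space V = {u. \<forall>k. k \<notin> V \<longrightarrow> u k = 0}"

definition basis_vec :: "'v \<Rightarrow> 'v \<Rightarrow> 'k::field_char_0" where
  "basis_vec i = (\<lambda>k. if k = i then 1 else 0)"

text \<open>Product: bilinear extension of e_i e_i = sum over k of a_ik e_k, e_i e_j = 0 (i \<noteq> j).\<close>
definition evo_mult :: "'v set \<Rightarrow> ('v \<Rightarrow> 'v \<Rightarrow> bool) \<Rightarrow> ('v \<Rightarrow> 'k::field_char_0) \<Rightarrow> ('v \<Rightarrow> 'k) \<Rightarrow> ('v \<Rightarrow> 'k)" where
  "evo_mult V E u v = (\<lambda>k. if k \<in> V then (\<Sum>i\<in>V. u i * v i * (if E i k then 1 else 0)) else 0)"

definition is_derivation :: "'v set \<Rightarrow> ('v \<Rightarrow> 'v \<Rightarrow> bool) \<Rightarrow> (('v \<Rightarrow> 'k::field_char_0) \<Rightarrow> ('v \<Rightarrow> 'k)) \<Rightarrow> bool" where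
  "is_derivation V E d \<longleftrightarrow>
     (\<forall>u\<in>evo_space V. d u \<in> evo_space V)
   \<and> (\<forall>u\<in>evo_space V. \<forall>v\<in>evo_space V. d (\<lambda>k. u k + v k) = (\<lambda>k. d u k + d v k))
   \<and> (\<forall>c. \<forall>u\<in>evo_space V. d (\<lambda>k. c * u k) = (\<lambda>k. c * d u k))
   \<and> (\<forall>u\<in>evo_space V. \<forall>v\<in>evo_space V.
        d (evo_mult V E u v) = (\<lambda>k. evo_mult V E (d u) v k + evo_mult V E u (d v) k))"

definition der_coeff :: "(('v \<Rightarrow> 'k::field_char_0) \<Rightarrow> ('v \<Rightarrow> 'k)) \<Rightarrow> 'v \<Rightarrow> 'v \<Rightarrow> 'k" where
  "der_coeff d i k = d (basis_vec i) k"

end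

theory Submission
  imports Defs
begin

text \<open>
  Write a for the adjacency matrix. Applying d to e_i e_j = 0 (i \<noteq> j) gives
  d_ij a_jk + d_ji a_ik = 0 for every k; since no vertex is isolated, this forces d_ij = 0
  when i and j are not twins and d_ij = -d_ji when they are. Applying d to
  e_i e_i = \<Sum>_l a_il e_l gives \<Sum>_l a_il d_lm = 2 d_ii a_im. For an edge i m only the twins
  of m survive in this column sum. Summing it over the twin class C of m, antisymmetry
  cancels the off-diagonal entries, and as d_ll is constant on C this gives d_mm = 2 d_ii.
  Symmetrically d_ii = 2 d_mm, so in characteristic 0 both vanish.
\<close>

definition twins :: "'v set \<Rightarrow> ('v \<Rightarrow> 'v \<Rightarrow> bool) \<Rightarrow> 'v \<Rightarrow> 'v set" where
  "twins V E x = {k \<in> V. nbhd E k = nbhd E x}"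

lemma connected_graph_no_isolated:
  assumes "connected_graph V E" and "card V \<ge> 2" and "i \<in> V"
  shows "\<exists>j. E i j"
proof -
  have "V \<noteq> {i}" using assms(2) by auto
  then obtain j where j: "j \<in> V" "j \<noteq> i" using assms(3) by blast
  have "E\<^sup>*\<^sup>* i j" using assms(1,3) j(1) by (simp add: connected_graph_def)
  then show ?thesis
  proof (cases rule: converse_rtranclpE)
    case base then show ?thesis using j(2) by simp
  next
    case (step y) then show ?thesis by blast
  qed
qed

lemma sum_sum_antisym_offdiag:
  fixes D :: "'a \<Rightarrow> 'a \<Rightarrow> 'k::field_char_0"
  assumes "finite C" and antisym: "\<And>a b. a \<in> C \<Longrightarrow> b \<in> C \<Longrightarrow> a \<noteq> b \<Longrightarrow> D b a = - D a b"
  shows "(\<Sum>a\<in>C. \<Sum>b\<in>C. D b a) = (\<Sum>a\<in>C. D a a)"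
proof -
  let ?S = "\<Sum>a\<in>C. \<Sum>b\<in>C. D b a"
  have "?S = (\<Sum>a\<in>C. \<Sum>b\<in>C. (if a = b then 2 * D a a else 0) - D a b)"
  proof (intro sum.cong refl)
    fix a b assume "a \<in> C" "b \<in> C"
    then show "D b a = (if a = b then 2 * D a a else 0) - D a b"
      using antisym[of a b] by (cases "a = b") simp_all
  qed
  also have "\<dots> = (\<Sum>a\<in>C. 2 * D a a) - (\<Sum>a\<in>C. \<Sum>b\<in>C. D a b)"
    using assms(1) by (simp add: sum_subtractf)
  also have "(\<Sum>a\<in>C. \<Sum>b\<in>C. D a b) = ?S" by (rule sum.swap)
  finally have "2 * ?S = 2 * (\<Sum>a\<in>C. D a a)" by (simp add: sum_distrib_left)
  then show ?thesis by simp
qed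

lemma basis_vec_in_evo_space: "i \<in> V \<Longrightarrow> basis_vec i \<in> evo_space V"
  by (auto simp: evo_space_def basis_vec_def)

lemma derivation_add:
  "is_derivation V E d \<Longrightarrow> u \<in> evo_space V \<Longrightarrow> v \<in> evo_space V \<Longrightarrow>
    d (\<lambda>k. u k + v k) = (\<lambda>k. d u k + d v k)"
  unfolding is_derivation_def by blast

lemma derivation_scale:
  "is_derivation V E d \<Longrightarrow> u \<in> evo_space V \<Longrightarrow> d (\<lambda>k. c * u k) = (\<lambda>k. c * d u k)"
  unfolding is_derivation_def by blast

lemma derivation_mult:
  "is_derivation V E d \<Longrightarrow> u \<in> evo_space V \<Longrightarrow> v \<in> evo_space V \<Longrightarrow>
    d (evo_mult V E u v) = (\<lambda>k. evo_mult V E (d u) v k + evo_mult V E u (d v) k)"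
  unfolding is_derivation_def by blast

lemma derivation_zero:
  assumes "is_derivation V E d"
  shows "d (\<lambda>k. 0) = (\<lambda>k. 0)"
  using derivation_scale[OF assms, of "\<lambda>k. 0" 0] by (simp add: evo_space_def)

lemma derivation_sum_basis:
  assumes der: "is_derivation V E d" and "finite S" and "S \<subseteq> V"
  shows "d (\<lambda>k. \<Sum>l\<in>S. c l * basis_vec l k) = (\<lambda>k. \<Sum>l\<in>S. c l * d (basis_vec l) k)"
  using assms(2,3)
proof (induction S rule: finite_induct)
  case empty
  then show ?case using derivation_zero[OF der] by simp
next
  case (insert a F)
  have a: "basis_vec a \<in> evo_space V" using insert.prems by (simp add: basis_vec_in_evo_space)
  then have ca: "(\<lambda>k. c a * basis_vec a k) \<in> evo_space V" by (auto simp: evo_space_def)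
  have F: "(\<lambda>k. \<Sum>l\<in>F. c l * basis_vec l k) \<in> evo_space V"
    using insert.prems by (auto simp: evo_space_def basis_vec_def intro!: sum.neutral)
  have "d (\<lambda>k. \<Sum>l\<in>insert a F. c l * basis_vec l k)
      = d (\<lambda>k. c a * basis_vec a k + (\<Sum>l\<in>F. c l * basis_vec l k))"
    using insert.hyps by simp
  also have "\<dots> = (\<lambda>k. c a * d (basis_vec a) k + d (\<lambda>k. \<Sum>l\<in>F. c l * basis_vec l k) k)"
    using derivation_add[OF der ca F] derivation_scale[OF der a] by simp
  finally show ?case using insert by simp
qed

lemma derivation_apply:
  assumes der: "is_derivation V E d" and fin: "finite V" and u: "u \<in> evo_space V"
  shows "d u = (\<lambda>k. \<Sum>l\<in>V. u l * der_coeff d l k)"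
proof -
  have "u = (\<lambda>k. \<Sum>l\<in>V. u l * basis_vec l k)"
  proof
    fix k
    show "u k = (\<Sum>l\<in>V. u l * basis_vec l k)"
      using u fin by (auto simp: basis_vec_def evo_space_def if_distrib cong: if_cong)
  qed
  then have "d u = d (\<lambda>k. \<Sum>l\<in>V. u l * basis_vec l k)" by simp
  also have "\<dots> = (\<lambda>k. \<Sum>l\<in>V. u l * d (basis_vec l) k)"
    by (rule derivation_sum_basis[OF der fin order_refl])
  finally show ?thesis by (simp add: der_coeff_def)
qed

lemma evo_mult_basis_vec_right:
  assumes "j \<in> V" and "finite V"
  shows "evo_mult V E u (basis_vec j) k = (if k \<in> V then u j * (if E j k then 1 else 0) else 0)"
proof -
  have "(\<Sum>i\<in>V. u i * basis_vec j i * (if E i k then 1 else 0))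
      = (\<Sum>i\<in>V. if i = j then u j * (if E j k then 1 else 0) else 0)"
    by (rule sum.cong) (auto simp: basis_vec_def)
  then show ?thesis using assms by (simp add: evo_mult_def)
qed

lemma evo_mult_basis_vec_left:
  assumes "j \<in> V" and "finite V"
  shows "evo_mult V E (basis_vec j) u k = (if k \<in> V then u j * (if E j k then 1 else 0) else 0)"
proof -
  have "(\<Sum>i\<in>V. basis_vec j i * u i * (if E i k then 1 else 0))
      = (\<Sum>i\<in>V. if i = j then u j * (if E j k then 1 else 0) else 0)"
    by (rule sum.cong) (auto simp: basis_vec_def)
  then show ?thesis using assms by (simp add: evo_mult_def)
qed

lemma derivation_basis_product:
  assumes "is_derivation V E d" and "i \<in> V" and "j \<in> V"
  shows "d (evo_mult V E (basis_vec i) (basis_vec j))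
       = (\<lambda>k. evo_mult V E (d (basis_vec i)) (basis_vec j) k + evo_mult V E (basis_vec i) (d (basis_vec j)) k)"
  using assms by (simp add: derivation_mult basis_vec_in_evo_space)

lemma der_coeff_orthogonal:
  assumes der: "is_derivation V E d" and fin: "finite V"
    and iV: "i \<in> V" and jV: "j \<in> V" and "i \<noteq> j" and "k \<in> V"
  shows "der_coeff d i j * (if E j k then 1 else 0) + der_coeff d j i * (if E i k then 1 else 0) = 0"
proof -
  have orth: "evo_mult V E (basis_vec i) (basis_vec j) = (\<lambda>k. 0)"
    using jV \<open>i \<noteq> j\<close> fin by (simp add: fun_eq_iff evo_mult_basis_vec_right) (simp add: basis_vec_def)
  have "d (evo_mult V E (basis_vec i) (basis_vec j)) k = 0"
    unfolding orth derivation_zero[OF der] ..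
  then have "evo_mult V E (d (basis_vec i)) (basis_vec j) k + evo_mult V E (basis_vec i) (d (basis_vec j)) k = 0"
    using fun_cong[OF derivation_basis_product[OF der iV jV], of k] by simp
  then show ?thesis
    using iV jV \<open>k \<in> V\<close> fin by (simp add: der_coeff_def evo_mult_basis_vec_right evo_mult_basis_vec_left)
qed

lemma der_coeff_square:
  assumes der: "is_derivation V E d" and fin: "finite V" and iV: "i \<in> V" and mV: "m \<in> V"
  shows "(\<Sum>l\<in>V. (if E i l then 1 else 0) * der_coeff d l m) = 2 * der_coeff d i i * (if E i m then 1 else 0)"
proof -
  let ?sq = "evo_mult V E (basis_vec i) (basis_vec i)"
  have sq: "?sq = (\<lambda>k. if k \<in> V then (if E i k then 1 else 0) else 0)"
    using iV fin by (simp add: fun_eq_iff evo_mult_basis_vec_right) (simp add: basis_vec_def)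
  have sq_space: "?sq \<in> evo_space V" unfolding sq by (simp add: evo_space_def)
  have "d ?sq m = (\<Sum>l\<in>V. ?sq l * der_coeff d l m)"
    by (subst derivation_apply[OF der fin sq_space]) (rule refl)
  also have "\<dots> = (\<Sum>l\<in>V. (if E i l then 1 else 0) * der_coeff d l m)"
    by (rule sum.cong) (simp_all add: sq)
  moreover have "d ?sq m = 2 * der_coeff d i i * (if E i m then 1 else 0)"
    using derivation_basis_product[OF der iV iV] mV iV fin
    by (simp add: der_coeff_def evo_mult_basis_vec_right evo_mult_basis_vec_left)
  ultimately show ?thesis by simp
qed

locale derivation_matrix =
  fixes V :: "'v set" and E :: "'v \<Rightarrow> 'v \<Rightarrow> bool" and D :: "'v \<Rightarrow> 'v \<Rightarrow> 'k::field_char_0"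
  assumes simple: "simple_graph V E"
    and no_isolated: "\<And>i. i \<in> V \<Longrightarrow> \<exists>j. E i j"
    and orthogonal: "\<And>i j k. i \<in> V \<Longrightarrow> j \<in> V \<Longrightarrow> i \<noteq> j \<Longrightarrow> k \<in> V \<Longrightarrow>
       D i j * (if E j k then 1 else 0) + D j i * (if E i k then 1 else 0) = 0"
    and square: "\<And>i m. i \<in> V \<Longrightarrow> m \<in> V \<Longrightarrow>
       (\<Sum>l\<in>V. (if E i l then 1 else 0) * D l m) = 2 * D i i * (if E i m then 1 else 0)"
begin

lemma edge_in_V: "E i j \<Longrightarrow> i \<in> V \<and> j \<in> V"
  using simple unfolding simple_graph_def by blast

lemma edge_sym: "E i j \<Longrightarrow> E j i"
  using simple unfolding simple_graph_def by blast

lemma finite_V: "finite V"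
  using simple unfolding simple_graph_def by blast

lemma twin_adjacent: "l \<in> twins V E m \<Longrightarrow> E i m \<Longrightarrow> E l i"
  using edge_sym by (auto simp: twins_def nbhd_def)

lemma coeff_eq_0_if_not_twins:
  assumes iV: "i \<in> V" and jV: "j \<in> V" and ne: "nbhd E i \<noteq> nbhd E j"
  shows "D i j = 0"
proof -
  have ij: "i \<noteq> j" using ne by auto
  obtain x where x: "E i x \<noteq> E j x" using ne by (auto simp: nbhd_def)
  show ?thesis
  proof (cases "E j x")
    case True
    then show ?thesis using orthogonal[OF iV jV ij, of x] x edge_in_V by auto
  next
    case False
    then have "D j i = 0" using orthogonal[OF iV jV ij, of x] x edge_in_V by auto
    moreover obtain y where "E j y" using no_isolated jV by blast
    ultimately show ?thesis using orthogonal[OF iV jV ij, of y] edge_in_V by auto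
  qed
qed

lemma coeff_antisym_if_twins:
  assumes iV: "i \<in> V" and jV: "j \<in> V" and ij: "i \<noteq> j" and eq: "nbhd E i = nbhd E j"
  shows "D j i = - D i j"
proof -
  obtain y where y: "E j y" using no_isolated jV by blast
  then have "E i y" using eq by (auto simp: nbhd_def)
  then show ?thesis using orthogonal[OF iV jV ij, of y] y edge_in_V
    by (simp add: eq_neg_iff_add_eq_0 add.commute)
qed

text \<open>In the column sum of \<open>square\<close>, exactly the twins of \<open>m\<close> survive: non-twins by
  \<open>coeff_eq_0_if_not_twins\<close>, and every twin of \<open>m\<close> is a neighbour of \<open>i\<close>.\<close>

lemma sum_twins_column:
  assumes iV: "i \<in> V" and mV: "m \<in> V" and im: "E i m"
  shows "(\<Sum>l\<in>twins V E m. D l m) = 2 * D i i"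
proof -
  have "(\<Sum>l\<in>V. (if E i l then 1 else 0) * D l m) = (\<Sum>l\<in>V. if l \<in> twins V E m then D l m else 0)"
  proof (rule sum.cong)
    fix l assume lV: "l \<in> V"
    show "(if E i l then 1 else 0) * D l m = (if l \<in> twins V E m then D l m else 0)"
    proof (cases "l \<in> twins V E m")
      case True
      then show ?thesis using twin_adjacent[OF True im] edge_sym by simp
    next
      case False
      then show ?thesis using coeff_eq_0_if_not_twins[OF lV mV] lV by (simp add: twins_def)
    qed
  qed simp
  also have "\<dots> = (\<Sum>l\<in>twins V E m. D l m)"
    using finite_V by (simp add: twins_def sum.inter_filter)
  finally show ?thesis using square[OF iV mV] im by simp
qed

lemma diag_eq_twice_neighbour_diag:
  assumes iV: "i \<in> V" and mV: "m \<in> V" and im: "E i m"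
  shows "D m m = 2 * D i i"
proof -
  let ?C = "twins V E m"
  have CV: "?C \<subseteq> V" by (auto simp: twins_def)
  have fin: "finite ?C" using finite_subset[OF CV finite_V] .
  have mC: "m \<in> ?C" using mV by (simp add: twins_def)
  have column: "(\<Sum>l\<in>?C. D l m') = 2 * D i i" if m': "m' \<in> ?C" for m'
  proof -
    have "twins V E m' = ?C" and "m' \<in> V" using m' by (auto simp: twins_def)
    moreover have "E i m'" using twin_adjacent[OF m' im] edge_sym by blast
    ultimately show ?thesis using sum_twins_column[OF iV] by metis
  qed
  have diag: "D l l = D m m" if l: "l \<in> ?C" for l
  proof -
    have "l \<in> V" using l by (simp add: twins_def)
    then have "(\<Sum>k\<in>twins V E i. D k i) = 2 * D l l"
      using sum_twins_column[OF _ iV twin_adjacent[OF l im]] by blast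
    then show ?thesis using sum_twins_column[OF mV iV edge_sym[OF im]] by simp
  qed
  have "of_nat (card ?C) * (2 * D i i) = (\<Sum>m'\<in>?C. \<Sum>l\<in>?C. D l m')"
    using column by simp
  also have "\<dots> = (\<Sum>l\<in>?C. D l l)"
    using fin by (rule sum_sum_antisym_offdiag) (auto simp: twins_def intro: coeff_antisym_if_twins)
  also have "\<dots> = of_nat (card ?C) * D m m"
    using diag by simp
  finally show ?thesis using fin mC by auto
qed

lemma diag_eq_0:
  assumes iV: "i \<in> V"
  shows "D i i = 0"
proof -
  obtain m where im: "E i m" using no_isolated[OF iV] by blast
  then have mV: "m \<in> V" using edge_in_V by blast
  have "D m m = 2 * D i i" using diag_eq_twice_neighbour_diag[OF iV mV im] .
  moreover have "D i i = 2 * D m m" using diag_eq_twice_neighbour_diag[OF mV iV edge_sym[OF im]] .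
  ultimately show ?thesis by simp
qed

end

theorem lemma3p6:
  fixes V :: "'v set" and E :: "'v \<Rightarrow> 'v \<Rightarrow> bool" and T :: "'v set"
    and d :: "('v \<Rightarrow> 'k::field_char_0) \<Rightarrow> ('v \<Rightarrow> 'k)"
  assumes "simple_graph V E" and "connected_graph V E" and "card V \<ge> 3"
    and "twin_class V E T"
    and "is_derivation V E d"
  shows "(\<forall>i\<in>T. \<forall>k\<in>V - T. der_coeff d i k = 0 \<and> der_coeff d k i = 0)
       \<and> (\<forall>i\<in>T. der_coeff d i i = 0)
       \<and> (\<forall>l\<in>nbhd_set E T. der_coeff d l l = 0)
       \<and> (\<forall>i\<in>T. \<forall>j\<in>T. i \<noteq> j \<longrightarrow> der_coeff d i j = - der_coeff d j i)"
proof -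
  have fin: "finite V" using assms(1) by (simp add: simple_graph_def)
  interpret derivation_matrix V E "der_coeff d"
  proof
    show "\<exists>j. E i j" if "i \<in> V" for i
      using connected_graph_no_isolated[OF assms(2) _ that] assms(3) by simp
  qed (rule assms(1) der_coeff_orthogonal[OF assms(5) fin] der_coeff_square[OF assms(5) fin]; assumption)+
  obtain i0 where T: "T = twins V E i0" using assms(4) by (auto simp: twin_class_def twins_def)
  have "\<forall>i\<in>T. \<forall>k\<in>V - T. der_coeff d i k = 0 \<and> der_coeff d k i = 0"
    using coeff_eq_0_if_not_twins by (auto simp: T twins_def)
  moreover have "\<forall>i\<in>T. der_coeff d i i = 0"
    using diag_eq_0 by (simp add: T twins_def)
  moreover have "\<forall>l\<in>nbhd_set E T. der_coeff d l l = 0"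
    using diag_eq_0 edge_in_V by (auto simp: nbhd_set_def nbhd_def)
  moreover have "\<forall>i\<in>T. \<forall>j\<in>T. i \<noteq> j \<longrightarrow> der_coeff d i j = - der_coeff d j i"
  proof (intro ballI impI)
    fix i j assume "i \<in> T" "j \<in> T" "i \<noteq> j"
    then show "der_coeff d i j = - der_coeff d j i"
      using coeff_antisym_if_twins[of j i] by (simp add: T twins_def)
  qed
  ultimately show ?thesis by blast
qed

end
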